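(* For every prime power $q$ and every integer $m$ with $1\leq m\leq q-1$, $$\sum_{i=0}^{m}\binom{q}{i}\sum_{d=i}^{m}\sum_{k=0}^{d-i}(-1)^k\binom{q-i}{k}q^{d-i-k}=\frac{q^{m+1}-1}{q-1}.$$ *)

theory Defs
  imports Complex_Main "HOL-Computational_Algebra.Primes"
begin

definition prime_power :: "nat \<Rightarrow> bool" where
  "prime_power q \<longleftrightarrow> (\<exists>p e. prime p \<and> e \<ge> 1 \<and> q = p ^ e)"

end

theory Submission
  imports Defs
begin

text \<open>
  Exchanging the sums over \<open>i \<le> d\<close>, the left-hand side becomes \<open>\<Sum>d\<le>m. c d\<close>, where
  \<open>c d\<close> sums \<open>C(q,i) (-1)^k C(q-i,k) q^(d-i-k)\<close> over \<open>i + k \<le> d\<close>.  Grouping by \<open>j = i + k\<close>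
  and using \<open>C(q,i) C(q-i,j-i) = C(q,j) C(j,i)\<close>, the coefficient of \<open>q^(d-j)\<close> is
  \<open>C(q,j) \<Sum>i\<le>j. (-1)^(j-i) C(j,i)\<close>, which vanishes unless \<open>j = 0\<close>.  So \<open>c d = q^d\<close>, and
  the claim is the geometric sum \<open>\<Sum>d\<le>m. q^d\<close>.
\<close>

lemma sum_atLeastAtMost_triangle_swap:
  fixes h :: "nat \<Rightarrow> nat \<Rightarrow> 'a::comm_monoid_add"
  shows "(\<Sum>i=0..m. \<Sum>d=i..m. h i d) = (\<Sum>d=0..m. \<Sum>i=0..d. h i d)"
  by (induction m) (auto simp: sum.distrib)

lemma binomial_mult_diff:
  assumes "i \<le> j"
  shows "(n choose i) * ((n - i) choose (j - i)) = (n choose j) * (j choose i)"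
proof (cases "j \<le> n")
  case True
  then show ?thesis using choose_mult[OF assms True] by simp
next
  case False
  then show ?thesis using assms by (cases "i \<le> n") (simp_all add: binomial_eq_0)
qed

lemma alternating_binomial_sum:
  "(\<Sum>i\<le>j. (-1) ^ (j - i) * of_nat (j choose i)) = (if j = 0 then 1 else (0::'a::comm_ring_1))"
proof -
  have "(\<Sum>i\<le>j. (-1) ^ (j - i) * of_nat (j choose i)) = (\<Sum>i\<le>j. of_nat (j choose i) * 1 ^ i * (-1::'a) ^ (j - i))"
    by (simp add: mult.commute)
  also have "\<dots> = (1 + (-1)) ^ j"
    by (simp only: binomial_ring atLeast0AtMost)
  finally show ?thesis by (simp add: power_0_left)
qed

lemma binomial_diff_convolution_power:
  fixes x :: "'a::comm_ring_1"
  shows "(\<Sum>i=0..d. of_nat (n choose i) *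
            (\<Sum>k=0..d-i. (-1) ^ k * of_nat ((n - i) choose k) * x ^ (d - i - k))) = x ^ d"
proof -
  define g where "g i k = of_nat (n choose i) * ((-1) ^ k * of_nat ((n - i) choose k) * x ^ (d - i - k))"
    for i k
  have coefficient: "g i (j - i) = x ^ (d - j) * of_nat (n choose j) * ((-1) ^ (j - i) * of_nat (j choose i))"
    if "i \<le> j" for i j
  proof -
    have "g i (j - i) = of_nat ((n choose i) * ((n - i) choose (j - i))) * (-1) ^ (j - i) * x ^ (d - j)"
      using that by (simp add: g_def algebra_simps)
    then show ?thesis
      by (simp add: binomial_mult_diff[OF that] algebra_simps)
  qed
  have "(\<Sum>i=0..d. of_nat (n choose i) *
            (\<Sum>k=0..d-i. (-1) ^ k * of_nat ((n - i) choose k) * x ^ (d - i - k)))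
      = (\<Sum>(i, k)\<in>{(i, k). i + k \<le> d}. g i k)"
    by (simp add: g_def sum_distrib_left atLeast0AtMost sum.Sigma)
       (auto intro!: sum.cong)
  also have "\<dots> = (\<Sum>j\<le>d. \<Sum>i\<le>j. g i (j - i))"
    by (rule sum.triangle_reindex_eq)
  also have "\<dots> = (\<Sum>j\<le>d. x ^ (d - j) * of_nat (n choose j) *
                             (\<Sum>i\<le>j. (-1) ^ (j - i) * of_nat (j choose i)))"
    by (simp add: coefficient sum_distrib_left)
  also have "\<dots> = (\<Sum>j\<le>d. if j = 0 then x ^ d else 0)"
    by (rule sum.cong) (simp_all add: alternating_binomial_sum)
  also have "\<dots> = x ^ d"
    by simp
  finally show ?thesis .
qed

lemma prime_power_ge_2: "prime_power q \<Longrightarrow> q \<ge> 2"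
  unfolding prime_power_def
  by (metis One_nat_def le_trans power_increasing power_one_right prime_ge_1_nat prime_ge_2_nat)

theorem mainTheorem2:
  fixes q m :: nat
  assumes "prime_power q" and "1 \<le> m" and "m \<le> q - 1"
  shows "(\<Sum>i=0..m. real (q choose i) *
            (\<Sum>d=i..m. \<Sum>k=0..d-i. (-1::real) ^ k * real ((q - i) choose k) * real q ^ (d - i - k)))
         = (real q ^ (m + 1) - 1) / (real q - 1)"
proof -
  have "real q \<noteq> 1"
    using prime_power_ge_2[OF assms(1)] by simp
  have "(\<Sum>i=0..m. real (q choose i) *
            (\<Sum>d=i..m. \<Sum>k=0..d-i. (-1::real) ^ k * real ((q - i) choose k) * real q ^ (d - i - k)))
      = (\<Sum>d=0..m. \<Sum>i=0..d. real (q choose i) *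
            (\<Sum>k=0..d-i. (-1::real) ^ k * real ((q - i) choose k) * real q ^ (d - i - k)))"
    by (simp add: sum_distrib_left sum_atLeastAtMost_triangle_swap)
  also have "\<dots> = (\<Sum>d=0..m. real q ^ d)"
    by (rule sum.cong[OF refl]) (rule binomial_diff_convolution_power)
  also have "\<dots> = (\<Sum>d<m + 1. real q ^ d)"
    by (simp add: atLeast0AtMost lessThan_Suc_atMost)
  also have "\<dots> = (real q ^ (m + 1) - 1) / (real q - 1)"
    by (rule geometric_sum[OF \<open>real q \<noteq> 1\<close>])
  finally show ?thesis .
qed

end
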